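(* The $\sigma$-ideal $I_P$ is not generated by closed sets in the Baire topology on $(\omega+1)^\omega$: there is a Borel set $A\in I_P$ such that $A$ is not contained in any countable union of sets $F_n$, each closed in the Baire topology and each belonging to $I_P$.
   Context: The Cantor topology on $(\omega+1)^\omega$ is the product of the order topologies on $\omega+1$; the Baire topology is generated by the sets $[\sigma]=\{x:\sigma\subseteq x\}$, $\sigma\in(\omega+1)^{<\omega}$. $P:(\omega+1)^\omega\to\omega^\omega$ is given by $P(x)(n)=x(n)+1$ if $x(n)<\omega$, $P(x)(n)=0$ if $x(n)=\omega$. $I_P$ is the $\sigma$-ideal of sets $A\subseteq(\omega+1)^\omega$ that can be covered by countably many sets on each of which $P$ is continuous (w.r.t. the Cantor topology). An ideal $I$ is generated by closed sets if every Borel set in $I$ has an $F_\sigma$ superset in $I$. *)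

theory Defs
  imports "HOL-Analysis.Analysis"
begin

text \<open>The space (omega+1)^omega is modelled as nat \<Rightarrow> enat. Its standard topology
(type class instance: product of the order topologies on enat) is the Cantor topology.
The target omega^omega is nat \<Rightarrow> nat with the product of discrete topologies.\<close>

definition P :: "(nat \<Rightarrow> enat) \<Rightarrow> (nat \<Rightarrow> nat)" where
  "P x = (\<lambda>n. case x n of enat k \<Rightarrow> k + 1 | \<infinity> \<Rightarrow> 0)"

definition cyl :: "enat list \<Rightarrow> (nat \<Rightarrow> enat) set" where
  "cyl \<sigma> = {x. \<forall>i < length \<sigma>. x i = \<sigma> ! i}"

definition baire_top :: "(nat \<Rightarrow> enat) topology" where
  "baire_top = topology_generated_by (range cyl)"

definition in_IP :: "(nat \<Rightarrow> enat) set \<Rightarrow> bool" where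
  "in_IP A \<longleftrightarrow> (\<exists>C :: nat \<Rightarrow> (nat \<Rightarrow> enat) set.
      A \<subseteq> (\<Union>n. C n) \<and> (\<forall>n. continuous_on (C n) P))"

end

theory Submission
  imports Defs "HOL-Library.Sublist"
begin

text \<open>
  The required Borel set consists of the x with x n = \<infinity> exactly when some later coordinate
  takes the value 2n+1. P is continuous on it, since x n = \<infinity> is decided by one finite
  coordinate.

  The points extending a finite sequence s by entries that are even or \<infinity> form a set outside
  I_P: a set on which P is continuous and which contains a point with coordinate K equal to \<infinity>
  misses all nearby points with a large even value at K, so a diagonal construction avoids any
  countable family of such sets. Now let F be Baire-closed and in I_P, and let s be consistent
  (a value 2n+1 at a later coordinate only occurs if the n-th entry is \<infinity>). Extending s by
  even entries or \<infinity> preserves consistency, so if all cylinders of consistent extensions of s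
  met F, closedness would put all even-tailed extensions of s into F. Hence some consistent
  extension of s has a cylinder disjoint from F. Alternately adding the missing witnesses and
  escaping F_0, F_1, \<dots> produces a point of the Borel set outside all F_n.
\<close>

lemma cyl_map_upt_iff: "y \<in> cyl (map x [0..<N]) \<longleftrightarrow> (\<forall>i<N. y i = x i)"
  by (simp add: cyl_def)

lemma cyl_antimono: "prefix s t \<Longrightarrow> x \<in> cyl t \<Longrightarrow> x \<in> cyl s"
  by (auto simp: cyl_def prefix_def nth_append)

lemma strict_prefix_chain_length_ge:
  assumes "\<And>j. strict_prefix (s j) (s (Suc j))"
  shows "j \<le> length (s j)"
proof -
  have "strict_mono (\<lambda>j. length (s j))"
    unfolding strict_mono_Suc_iff using assms prefix_length_less by blast
  then show ?thesis by (rule strict_mono_imp_increasing)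
qed

lemma strict_prefix_chain_limit:
  assumes chain: "\<And>j. strict_prefix (s j) (s (Suc j))"
  shows "\<exists>x. \<forall>j. x \<in> cyl (s j)"
proof (intro exI allI)
  have mono: "j \<le> j' \<Longrightarrow> prefix (s j) (s j')" for j j'
    by (rule transitive_stepwise_le) (use chain prefix_order.trans in \<open>auto simp: strict_prefix_def\<close>)
  have nth_eq: "s j ! i = s j' ! i" if "i < length (s j)" "j \<le> j'" for i j j'
    using mono[OF \<open>j \<le> j'\<close>] that(1) by (auto simp: prefix_def nth_append)
  fix j
  show "(\<lambda>i. s (Suc i) ! i) \<in> cyl (s j)"
    unfolding cyl_def
  proof (intro CollectI allI impI)
    fix i assume i: "i < length (s j)"
    have "i < length (s (Suc i))"
      using strict_prefix_chain_length_ge[of s, OF chain, of "Suc i"] by simp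
    then have "s (Suc i) ! i = s (max j (Suc i)) ! i" by (intro nth_eq) auto
    also have "\<dots> = s j ! i" using nth_eq[OF i, of "max j (Suc i)"] by simp
    finally show "s (Suc i) ! i = s j ! i" .
  qed
qed

lemma generated_by_cyl_contains_cyl:
  "generate_topology_on (range cyl) U \<Longrightarrow> x \<in> U \<Longrightarrow> \<exists>N. cyl (map x [0..<N]) \<subseteq> U"
proof (induction arbitrary: x rule: generate_topology_on.induct)
  case Empty
  then show ?case by simp
next
  case (Int a b)
  then obtain N1 N2 where "cyl (map x [0..<N1]) \<subseteq> a" "cyl (map x [0..<N2]) \<subseteq> b"
    by blast
  then have "cyl (map x [0..<max N1 N2]) \<subseteq> a \<inter> b"
    by (auto simp: cyl_map_upt_iff)
  then show ?case ..
next
  case (UN K)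
  then obtain k where "k \<in> K" "x \<in> k" by blast
  with UN.IH show ?case by blast
next
  case (Basis s)
  then obtain \<sigma> where "s = cyl \<sigma>" by blast
  with Basis.prems show ?case
    by (intro exI[of _ "length \<sigma>"]) (auto simp: cyl_def)
qed

lemma closedin_baire_top_limit:
  assumes "closedin baire_top F" "\<And>N. cyl (map x [0..<N]) \<inter> F \<noteq> {}"
  shows "x \<in> F"
proof (rule ccontr)
  assume "x \<notin> F"
  have "cyl [] = UNIV" by (simp add: cyl_def)
  then have "topspace baire_top = UNIV"
    unfolding baire_top_def topology_generated_by_topspace by blast
  with assms(1) have "generate_topology_on (range cyl) (- F)"
    unfolding closedin_def baire_top_def by (simp add: Compl_eq_Diff_UNIV openin_topology_generated_by)
  with \<open>x \<notin> F\<close> obtain N where "cyl (map x [0..<N]) \<subseteq> - F"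
    using generated_by_cyl_contains_cyl by blast
  with assms(2) show False by blast
qed

lemma in_IP_subset: "in_IP B \<Longrightarrow> A \<subseteq> B \<Longrightarrow> in_IP A"
  unfolding in_IP_def by blast

lemma in_IP_if_continuous_on: "continuous_on A P \<Longrightarrow> in_IP A"
  unfolding in_IP_def by (intro exI[of _ "\<lambda>_. A"]) auto

lemma P_eq_0_iff: "P x n = 0 \<longleftrightarrow> x n = \<infinity>"
  by (cases "x n") (auto simp: P_def)

lemma continuous_on_P_at_infinity:
  assumes "continuous_on C P" "x \<in> C" "x K = \<infinity>"
  obtains N m where "K < N"
    "\<And>y. y \<in> C \<Longrightarrow> (\<forall>i<N. i \<noteq> K \<longrightarrow> y i = x i) \<Longrightarrow> enat m < y K \<Longrightarrow> y K = \<infinity>"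
proof -
  have "continuous_on C (\<lambda>y. P y K)"
    using assms(1) by (rule continuous_on_product_then_coordinatewise)
  moreover have "P x K \<in> {0}" using assms(3) by (simp add: P_eq_0_iff)
  ultimately obtain A where A: "open A" "x \<in> A" "\<And>y. y \<in> C \<Longrightarrow> y \<in> A \<Longrightarrow> y K = \<infinity>"
    using assms(2) unfolding continuous_on_topological
    by (metis open_discrete singletonD P_eq_0_iff)
  from A(1) have "openin (product_topology (\<lambda>i. euclidean) UNIV) A"
    by (simp add: open_fun_def)
  then obtain U where U: "finite {i. U i \<noteq> UNIV}" "\<And>i. open (U i)"
      "x \<in> Pi\<^sub>E UNIV U" "Pi\<^sub>E UNIV U \<subseteq> A"
    unfolding openin_product_topology_alt using A(2) by auto
  from U(3) have x_in_U: "x i \<in> U i" for i by (simp add: PiE_iff)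
  then have "\<infinity> \<in> U K" using assms(3) by metis
  with U(2) obtain m where m: "{enat m<..} \<subseteq> U K" by (auto simp: open_enat_iff)
  define N where "N = Suc (Max (insert K {i. U i \<noteq> UNIV}))"
  have N: "K < N" "\<And>i. U i \<noteq> UNIV \<Longrightarrow> i < N"
    unfolding N_def using U(1) by (auto simp: le_imp_less_Suc)
  show thesis
  proof (rule that[OF N(1)])
    fix y assume y: "y \<in> C" "\<forall>i<N. i \<noteq> K \<longrightarrow> y i = x i" "enat m < y K"
    have "y i \<in> U i" for i
    proof -
      consider "i = K" | "U i = UNIV" | "i \<noteq> K" "i < N"
        using N(2) by blast
      then show ?thesis
        by cases (use m y(2,3) x_in_U in auto)
    qed
    with U(4) have "y \<in> A" by auto
    with A(3) y(1) show "y K = \<infinity>" by blast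
  qed
qed

definition even_or_infinity :: "enat set" where
  "even_or_infinity = insert \<infinity> (range (\<lambda>k. enat (2 * k)))"

definition even_tail :: "enat list \<Rightarrow> (nat \<Rightarrow> enat) set" where
  "even_tail s = {x \<in> cyl s. \<forall>i\<ge>length s. x i \<in> even_or_infinity}"

definition even_extension :: "enat list \<Rightarrow> enat list \<Rightarrow> bool" where
  "even_extension s t \<longleftrightarrow> (\<exists>u. t = s @ u \<and> set u \<subseteq> even_or_infinity)"

lemma even_extension_refl: "even_extension s s"
  unfolding even_extension_def by (intro exI[of _ "[]"]) simp

lemma even_extension_trans: "even_extension r s \<Longrightarrow> even_extension s t \<Longrightarrow> even_extension r t"
  unfolding even_extension_def by (metis append.assoc le_sup_iff set_append)

lemma prefix_if_even_extension: "even_extension s t \<Longrightarrow> prefix s t"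
  unfolding even_extension_def prefix_def by blast

lemma even_extension_map_upt:
  assumes "x \<in> even_tail s" "length s \<le> N"
  shows "even_extension s (map x [0..<N])"
proof -
  have "map x [0..<length s] = s"
    using assms(1) by (intro nth_equalityI) (auto simp: even_tail_def cyl_def)
  then have "map x [0..<N] = s @ map x [length s..<N]"
    using assms(2) by (metis le_add_diff_inverse map_append upt_add_eq_append zero_le)
  moreover have "set (map x [length s..<N]) \<subseteq> even_or_infinity"
    using assms(1) by (auto simp: even_tail_def)
  ultimately show ?thesis unfolding even_extension_def by blast
qed

lemma even_extension_chain_limit:
  assumes "\<And>j. even_extension (s j) (s (Suc j))" "\<And>j. length (s j) < length (s (Suc j))"
    and "\<And>j. x \<in> cyl (s j)"
  shows "x \<in> even_tail (s j)"
  unfolding even_tail_def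
proof (intro CollectI conjI allI impI)
  show "x \<in> cyl (s j)" by fact
  fix i assume i: "length (s j) \<le> i"
  define j' where "j' = max j (Suc i)"
  have "even_extension (s j) (s j')"
    by (rule transitive_stepwise_le) (use assms(1) even_extension_refl even_extension_trans in
        \<open>auto simp: j'_def\<close>)
  then obtain u where u: "s j' = s j @ u" "set u \<subseteq> even_or_infinity"
    unfolding even_extension_def by blast
  have "strict_mono (\<lambda>j. length (s j))"
    unfolding strict_mono_Suc_iff using assms(2) by blast
  then have "Suc i \<le> length (s j')"
    by (metis j'_def max.cobounded2 order_trans strict_mono_imp_increasing strict_mono_less_eq)
  then have "x i = s j' ! i" using assms(3)[of j'] by (simp add: cyl_def)
  also have "\<dots> = u ! (i - length (s j))" using u(1) i by (simp add: nth_append)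
  also have "\<dots> \<in> even_or_infinity"
    using u \<open>Suc i \<le> length (s j')\<close> i by (intro subsetD[OF u(2)] nth_mem) auto
  finally show "x i \<in> even_or_infinity" .
qed

lemma even_extension_avoiding:
  assumes "continuous_on C P"
  obtains t where "even_extension s t" "length s < length t" "even_tail t \<inter> C = {}"
proof (cases "even_tail (s @ [\<infinity>]) \<inter> C = {}")
  case True
  moreover have "even_extension s (s @ [\<infinity>])"
    by (auto simp: even_extension_def even_or_infinity_def)
  ultimately show thesis using that by simp
next
  case False
  let ?K = "length s"
  obtain x where x: "x \<in> even_tail (s @ [\<infinity>])" "x \<in> C" using False by blast
  then have "x ?K = \<infinity>" by (simp add: even_tail_def cyl_def)
  then obtain N m where N: "?K < N" and near_x:
    "\<And>y. y \<in> C \<Longrightarrow> (\<forall>i<N. i \<noteq> ?K \<longrightarrow> y i = x i) \<Longrightarrow> enat m < y ?K \<Longrightarrow> y ?K = \<infinity>"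
    using continuous_on_P_at_infinity[OF assms x(2)] by blast
  define x' where "x' = x(?K := enat (2 * Suc m))"
  have "x' \<in> even_tail s"
    unfolding even_tail_def cyl_def
  proof (intro CollectI conjI allI impI)
    fix i assume "i < length s"
    then show "x' i = s ! i" using x(1) by (auto simp: x'_def even_tail_def cyl_def nth_append)
  next
    fix i assume "length s \<le> i"
    have "enat (2 * Suc m) \<in> even_or_infinity" unfolding even_or_infinity_def by blast
    moreover consider "i = ?K" | "length (s @ [\<infinity>]) \<le> i" using \<open>length s \<le> i\<close> by fastforce
    ultimately show "x' i \<in> even_or_infinity"
      by cases (use x(1) in \<open>auto simp: x'_def even_tail_def\<close>)
  qed
  define t where "t = map x' [0..<N]"
  have "even_tail t \<inter> C = {}"
  proof (intro equals0I)
    fix y assume y: "y \<in> even_tail t \<inter> C"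
    then have "\<forall>i<N. y i = x' i" by (simp add: even_tail_def t_def cyl_map_upt_iff)
    then have "\<forall>i<N. i \<noteq> ?K \<longrightarrow> y i = x i" "y ?K = enat (2 * Suc m)"
      using N by (auto simp: x'_def)
    moreover have "enat m < enat (2 * Suc m)" by simp
    ultimately show False using near_x[of y] y by auto
  qed
  moreover have "even_extension s t"
    using even_extension_map_upt[OF \<open>x' \<in> even_tail s\<close>] N by (simp add: t_def)
  moreover have "length s < length t" using N by (simp add: t_def)
  ultimately show thesis using that by blast
qed

lemma not_in_IP_even_tail: "\<not> in_IP (even_tail s)"
proof
  assume "in_IP (even_tail s)"
  then obtain C :: "nat \<Rightarrow> (nat \<Rightarrow> enat) set"
    where cover: "even_tail s \<subseteq> (\<Union>j. C j)" and cont: "\<And>j. continuous_on (C j) P"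
    unfolding in_IP_def by blast
  define step where "step j t t' \<longleftrightarrow>
    even_extension t t' \<and> length t < length t' \<and> even_tail t' \<inter> C j = {}" for j t t'
  have step_exists: "\<exists>t'. step j t t'" for j t
  proof -
    obtain t' where "even_extension t t'" "length t < length t'" "even_tail t' \<inter> C j = {}"
      by (rule even_extension_avoiding[OF cont])
    then show ?thesis unfolding step_def by blast
  qed
  have "\<exists>st. \<forall>j. (j = 0 \<longrightarrow> st j = s) \<and> step j (st j) (st (Suc j))"
    by (rule dependent_nat_choice) (use step_exists in auto)
  then obtain st where st0: "st 0 = s" and st: "\<And>j. step j (st j) (st (Suc j))"
    by blast
  have "strict_prefix (st j) (st (Suc j))" for j
  proof -
    from st[of j] have "prefix (st j) (st (Suc j))" "length (st j) < length (st (Suc j))"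
      by (simp_all add: step_def prefix_if_even_extension)
    then show ?thesis by (auto simp: strict_prefix_def)
  qed
  then obtain x where "\<And>j. x \<in> cyl (st j)" using strict_prefix_chain_limit by blast
  then have x: "x \<in> even_tail (st j)" for j
    using st unfolding step_def by (intro even_extension_chain_limit) blast+
  from x[of 0] st0 cover obtain j where "x \<in> C j" by auto
  moreover have "even_tail (st (Suc j)) \<inter> C j = {}" using st[of j] by (simp add: step_def)
  ultimately show False using x[of "Suc j"] by blast
qed

definition witness_consistent :: "enat list \<Rightarrow> bool" where
  "witness_consistent s \<longleftrightarrow> (\<forall>m<length s. \<forall>n<m. s ! m = enat (2 * n + 1) \<longrightarrow> s ! n = \<infinity>)"

definition add_witnesses :: "enat list \<Rightarrow> enat list" where
  "add_witnesses s = s @ map (\<lambda>n. if s ! n = \<infinity> then enat (2 * n + 1) else 0) [0..<length s]"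

lemma prefix_add_witnesses: "prefix s (add_witnesses s)"
  unfolding add_witnesses_def by (rule prefixI) (rule refl)

lemma add_witnesses_nth:
  assumes "n < length s" "s ! n = \<infinity>"
  shows "length s + n < length (add_witnesses s)" "add_witnesses s ! (length s + n) = enat (2 * n + 1)"
  using assms by (simp_all add: add_witnesses_def nth_append)

lemma witness_consistent_add_witnesses:
  assumes "witness_consistent s"
  shows "witness_consistent (add_witnesses s)"
  unfolding witness_consistent_def
proof (intro allI impI)
  fix m n assume m: "m < length (add_witnesses s)" and "n < m"
    and wm: "add_witnesses s ! m = enat (2 * n + 1)"
  show "add_witnesses s ! n = \<infinity>"
  proof (cases "m < length s")
    case True
    then have "s ! m = enat (2 * n + 1)" "add_witnesses s ! n = s ! n"
      using wm \<open>n < m\<close> by (simp_all add: add_witnesses_def nth_append)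
    with assms True \<open>n < m\<close> show ?thesis unfolding witness_consistent_def by simp
  next
    case False
    define k where "k = m - length s"
    have k: "k < length s" "m = length s + k"
      using m False by (simp_all add: add_witnesses_def k_def)
    show ?thesis
    proof (cases "s ! k = \<infinity>")
      case True
      with k wm have "k = n" by (simp add: add_witnesses_nth)
      with k True show ?thesis by (simp add: add_witnesses_def nth_append)
    next
      case False
      with k wm show ?thesis by (simp add: add_witnesses_def nth_append zero_enat_def)
    qed
  qed
qed

lemma witness_consistent_map_upt:
  assumes "witness_consistent s" "x \<in> even_tail s"
  shows "witness_consistent (map x [0..<N])"
  unfolding witness_consistent_def
proof (intro allI impI)
  fix m n assume "m < length (map x [0..<N])" "n < m" and "map x [0..<N] ! m = enat (2 * n + 1)"
  then have "m < N" and xm: "x m = enat (2 * n + 1)" by auto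
  have "m < length s"
  proof (rule ccontr)
    assume "\<not> m < length s"
    then have "x m \<in> even_or_infinity" using assms(2) by (simp add: even_tail_def)
    with xm show False unfolding even_or_infinity_def by auto presburger
  qed
  then have "s ! m = enat (2 * n + 1)" "x n = s ! n"
    using xm assms(2) \<open>n < m\<close> by (auto simp: even_tail_def cyl_def)
  with assms(1) \<open>m < length s\<close> \<open>n < m\<close> \<open>m < N\<close> show "map x [0..<N] ! n = \<infinity>"
    unfolding witness_consistent_def by auto
qed

lemma witness_consistent_extension_avoiding:
  assumes "witness_consistent s" "closedin baire_top F" "in_IP F"
  obtains t where "prefix s t" "length s < length t" "witness_consistent t" "cyl t \<inter> F = {}"
proof (rule ccontr)
  assume no_t: "\<not> thesis"
  have "even_tail s \<subseteq> F"
  proof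
    fix x assume x: "x \<in> even_tail s"
    show "x \<in> F"
    proof (rule closedin_baire_top_limit[OF assms(2)])
      fix N
      define t where "t = map x [0..<max N (Suc (length s))]"
      have "prefix s t"
        using even_extension_map_upt[OF x] prefix_if_even_extension by (simp add: t_def)
      moreover have "length s < length t" by (simp add: t_def)
      moreover have "witness_consistent t"
        unfolding t_def by (rule witness_consistent_map_upt[OF assms(1) x])
      ultimately have "cyl t \<inter> F \<noteq> {}" using no_t that by blast
      moreover have "cyl t \<subseteq> cyl (map x [0..<N])" by (auto simp: t_def cyl_map_upt_iff)
      ultimately show "cyl (map x [0..<N]) \<inter> F \<noteq> {}" by blast
    qed
  qed
  with assms(3) not_in_IP_even_tail in_IP_subset show False by blast
qed

definition witnessed_infinities :: "(nat \<Rightarrow> enat) set" where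
  "witnessed_infinities = {x.
     (\<forall>n m. n < m \<longrightarrow> x m = enat (2 * n + 1) \<longrightarrow> x n = \<infinity>) \<and>
     (\<forall>n. x n = \<infinity> \<longrightarrow> (\<exists>m>n. x m = enat (2 * n + 1)))}"

lemma witnessed_infinities_borel: "witnessed_infinities \<in> sets borel"
proof -
  have coord: "{x \<in> space borel. (x :: nat \<Rightarrow> enat) i = c} \<in> sets borel" for i c
    by (simp add: borel_closed closed_Collect_eq)
  have "{x \<in> space borel. (\<forall>n m. n < m \<longrightarrow> x m = enat (2 * n + 1) \<longrightarrow> x n = \<infinity>) \<and>
      (\<forall>n. x n = \<infinity> \<longrightarrow> (\<exists>m. n < m \<and> x m = enat (2 * n + 1)))} \<in> sets borel"
    by (intro sets.sets_Collect_conj sets.sets_Collect_countable_All sets.sets_Collect_imp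
        sets.sets_Collect_countable_Ex sets.sets_Collect_const coord)
  then show ?thesis unfolding witnessed_infinities_def by simp
qed

lemma witnessed_infinities_P_determined:
  assumes "x \<in> witnessed_infinities"
  obtains m k where "x m = enat k"
    "\<And>y. y \<in> witnessed_infinities \<Longrightarrow> y m = x m \<Longrightarrow> P y n = P x n"
proof (cases "x n")
  case (enat k)
  then show thesis by (intro that[of n k]) (auto simp: P_def)
next
  case infinity
  then obtain m where "n < m" "x m = enat (2 * n + 1)"
    using assms unfolding witnessed_infinities_def by blast
  with infinity show thesis
    by (intro that[of m "2 * n + 1"]) (auto simp: witnessed_infinities_def P_def)
qed

lemma continuous_on_witnessed_infinities: "continuous_on witnessed_infinities P"
proof (rule continuous_on_coordinatewise_then_product)
  fix n
  show "continuous_on witnessed_infinities (\<lambda>x. P x n)"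
    unfolding continuous_on_topological
  proof (intro ballI allI impI)
    fix x B assume x: "x \<in> witnessed_infinities" and "P x n \<in> B"
    obtain m k where m: "x m = enat k"
      "\<And>y. y \<in> witnessed_infinities \<Longrightarrow> y m = x m \<Longrightarrow> P y n = P x n"
      using witnessed_infinities_P_determined[OF x] by blast
    have "open ((\<lambda>y. y m) -` {enat k})"
      by (rule open_vimage[OF open_enat continuous_on_product_coordinates])
    with m \<open>P x n \<in> B\<close> show "\<exists>A. open A \<and> x \<in> A \<and> (\<forall>y\<in>witnessed_infinities. y \<in> A \<longrightarrow> P y n \<in> B)"
      by (intro exI[of _ "(\<lambda>y. y m) -` {enat k}"]) auto
  qed
qed

lemma witnessed_infinities_chain_limit:
  assumes consistent: "\<And>j. witness_consistent (s j)"
    and witnesses: "\<And>j. prefix (add_witnesses (s j)) (s (Suc j))"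
    and chain: "\<And>j. strict_prefix (s j) (s (Suc j))"
    and x: "\<And>j. x \<in> cyl (s j)"
  shows "x \<in> witnessed_infinities"
  unfolding witnessed_infinities_def
proof (intro CollectI conjI allI impI)
  fix n m assume "n < m" "x m = enat (2 * n + 1)"
  have "m < length (s (Suc m))"
    using strict_prefix_chain_length_ge[of s, OF chain, of "Suc m"] by simp
  with x[of "Suc m"] \<open>n < m\<close> \<open>x m = enat (2 * n + 1)\<close>
  have "s (Suc m) ! m = enat (2 * n + 1)" "x n = s (Suc m) ! n"
    by (auto simp: cyl_def)
  with consistent[of "Suc m"] \<open>m < length (s (Suc m))\<close> \<open>n < m\<close> show "x n = \<infinity>"
    unfolding witness_consistent_def by simp
next
  fix n assume "x n = \<infinity>"
  define j where "j = Suc n"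
  have n: "n < length (s j)"
    using strict_prefix_chain_length_ge[of s, OF chain, of j] by (simp add: j_def)
  with x[of j] \<open>x n = \<infinity>\<close> have "s j ! n = \<infinity>" by (simp add: cyl_def)
  with n have w: "length (s j) + n < length (add_witnesses (s j))"
      "add_witnesses (s j) ! (length (s j) + n) = enat (2 * n + 1)"
    by (rule add_witnesses_nth)+
  have "x \<in> cyl (add_witnesses (s j))"
    using cyl_antimono[OF witnesses x] .
  with w have "x (length (s j) + n) = enat (2 * n + 1)" by (simp add: cyl_def)
  moreover have "n < length (s j) + n" using n by linarith
  ultimately show "\<exists>m>n. x m = enat (2 * n + 1)" by blast
qed

lemma witnessed_infinities_not_covered:
  fixes F :: "nat \<Rightarrow> (nat \<Rightarrow> enat) set"
  assumes "\<And>k. closedin baire_top (F k)" "\<And>k. in_IP (F k)"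
  shows "\<not> witnessed_infinities \<subseteq> (\<Union>k. F k)"
proof
  assume cover: "witnessed_infinities \<subseteq> (\<Union>k. F k)"
  define step where "step k t t' \<longleftrightarrow> prefix (add_witnesses t) t' \<and>
    length (add_witnesses t) < length t' \<and> cyl t' \<inter> F k = {}" for k t t'
  have step_exists: "\<exists>t'. witness_consistent t' \<and> step k t t'" if t: "witness_consistent t" for k t
  proof -
    obtain t' where "prefix (add_witnesses t) t'" "length (add_witnesses t) < length t'"
        "witness_consistent t'" "cyl t' \<inter> F k = {}"
      using witness_consistent_extension_avoiding[OF witness_consistent_add_witnesses[OF t]
          assms(1,2)] by blast
    then show ?thesis unfolding step_def by blast
  qed
  have "\<exists>st. \<forall>k. witness_consistent (st k) \<and> step k (st k) (st (Suc k))"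
  proof (rule dependent_nat_choice)
    have "witness_consistent []" by (simp add: witness_consistent_def)
    then show "\<exists>t. witness_consistent t" ..
  qed (rule step_exists)
  then obtain st where consistent: "\<And>k. witness_consistent (st k)"
    and st: "\<And>k. step k (st k) (st (Suc k))"
    by blast
  have "strict_prefix (st k) (st (Suc k))" for k
  proof -
    have "prefix (st k) (add_witnesses (st k))" by (rule prefix_add_witnesses)
    moreover have "prefix (add_witnesses (st k)) (st (Suc k))"
      "length (add_witnesses (st k)) < length (st (Suc k))"
      using st[of k] by (simp_all add: step_def)
    ultimately have "prefix (st k) (st (Suc k))" "length (st k) < length (st (Suc k))"
      using prefix_order.trans prefix_length_le[of "st k"] by (blast, force)
    then show ?thesis by (auto simp: strict_prefix_def)
  qed
  moreover obtain x where x: "\<And>k. x \<in> cyl (st k)"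
    using strict_prefix_chain_limit[of st, OF calculation] by blast
  moreover have "prefix (add_witnesses (st k)) (st (Suc k))" for k
    using st[of k] by (simp add: step_def)
  ultimately have "x \<in> witnessed_infinities"
    using consistent by (intro witnessed_infinities_chain_limit)
  with cover obtain k where "x \<in> F k" by blast
  moreover have "cyl (st (Suc k)) \<inter> F k = {}" using st[of k] by (simp add: step_def)
  ultimately show False using x[of "Suc k"] by blast
qed

theorem mainTheorem8:
  shows "\<exists>A :: (nat \<Rightarrow> enat) set. A \<in> sets borel \<and> in_IP A \<and>
     \<not> (\<exists>F :: nat \<Rightarrow> (nat \<Rightarrow> enat) set.
           (\<forall>n. closedin baire_top (F n) \<and> in_IP (F n)) \<and> A \<subseteq> (\<Union>n. F n))"
proof (intro exI[of _ witnessed_infinities] conjI)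
  show "witnessed_infinities \<in> sets borel" by (rule witnessed_infinities_borel)
  show "in_IP witnessed_infinities"
    by (rule in_IP_if_continuous_on[OF continuous_on_witnessed_infinities])
  show "\<not> (\<exists>F :: nat \<Rightarrow> (nat \<Rightarrow> enat) set.
           (\<forall>n. closedin baire_top (F n) \<and> in_IP (F n)) \<and> witnessed_infinities \<subseteq> (\<Union>n. F n))"
  proof
    assume "\<exists>F :: nat \<Rightarrow> (nat \<Rightarrow> enat) set.
      (\<forall>n. closedin baire_top (F n) \<and> in_IP (F n)) \<and> witnessed_infinities \<subseteq> (\<Union>n. F n)"
    then obtain F :: "nat \<Rightarrow> (nat \<Rightarrow> enat) set" where
      "\<And>n. closedin baire_top (F n)" "\<And>n. in_IP (F n)" "witnessed_infinities \<subseteq> (\<Union>n. F n)"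
      by blast
    with witnessed_infinities_not_covered show False by blast
  qed
qed

end
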